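(* Let $(G,\cdot,\odot,H,\circ,\boxdot,N,\star)$ be a two-sided bracoid (so $(N,\star)$ is abelian). Then for all $g\in G$, $h\in H$ and $\eta\in N$: (1) $\alpha(g)$ is an endomorphism of $(N,\star)$; (2) $\beta(h)$ is an endomorphism of $(N,\star)$; (3) $({}^{\gamma(g)}\eta)^{\delta(h)}={}^{\gamma(g)}(\eta^{\delta(h)})$; (4) $({}^{\alpha(g)}\eta)^{\beta(h)}={}^{\alpha(g)}(\eta^{\beta(h)})$.
   Context: For a group $(N,\star)$, $e_N$ denotes its identity and $\overline{\eta}$ the inverse of $\eta$. A left skew bracoid is $(G,\cdot,N,\star,\odot)$ with $(G,\cdot),(N,\star)$ groups and $\odot$ a transitive left action of $G$ on $N$ with $g\odot(\mu\star\eta)=(g\odot\mu)\star\overline{(g\odot e_N)}\star(g\odot\eta)$ for all $g\in G$, $\mu,\eta\in N$. A right skew bracoid is $(H,\circ,N,\star,\boxdot)$ with $(H,\circ),(N,\star)$ groups and $\boxdot$ a transitive right action of $H$ on $N$ with $(\eta\star\mu)\boxdot h=(\eta\boxdot h)\star\overline{(e_N\boxdot h)}\star(\mu\boxdot h)$ for all $h\in H$, $\eta,\mu\in N$. A two-sided skew bracoid $(G,\cdot,\odot,H,\circ,\boxdot,N,\star)$ consists of a left skew bracoid $(G,\cdot,N,\star,\odot)$ and a right skew bracoid $(H,\circ,N,\star,\boxdot)$ on the same group $(N,\star)$ such that $g\odot(\eta\boxdot h)=(g\odot\eta)\boxdot h$ for all $g\in G,h\in H,\eta\in N$; it is a two-sided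 bracoid if $(N,\star)$ is abelian. Define, for $g\in G$, $h\in H$, $\eta\in N$: ${}^{\gamma(g)}\eta=\overline{(g\odot e_N)}\star(g\odot\eta)$; ${}^{\alpha(g)}\eta=\overline{(g\odot e_N)}\star(g\odot\eta)\star\overline{\eta}$; $\eta^{\delta(h)}=(\eta\boxdot h)\star\overline{(e_N\boxdot h)}$; $\eta^{\beta(h)}=\overline{\eta}\star(\eta\boxdot h)\star\overline{(e_N\boxdot h)}$. *)

theory Defs
  imports "HOL-Algebra.Group"
begin

definition left_action :: "('g,'a) monoid_scheme \<Rightarrow> ('n,'b) monoid_scheme \<Rightarrow> ('g \<Rightarrow> 'n \<Rightarrow> 'n) \<Rightarrow> bool" where
  "left_action G N act \<longleftrightarrow>
     (\<forall>g\<in>carrier G. \<forall>x\<in>carrier N. act g x \<in> carrier N) \<and>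
     (\<forall>x\<in>carrier N. act \<one>\<^bsub>G\<^esub> x = x) \<and>
     (\<forall>g\<in>carrier G. \<forall>k\<in>carrier G. \<forall>x\<in>carrier N. act (g \<otimes>\<^bsub>G\<^esub> k) x = act g (act k x))"

definition right_action :: "('h,'a) monoid_scheme \<Rightarrow> ('n,'b) monoid_scheme \<Rightarrow> ('n \<Rightarrow> 'h \<Rightarrow> 'n) \<Rightarrow> bool" where
  "right_action H N act \<longleftrightarrow>
     (\<forall>h\<in>carrier H. \<forall>x\<in>carrier N. act x h \<in> carrier N) \<and>
     (\<forall>x\<in>carrier N. act x \<one>\<^bsub>H\<^esub> = x) \<and>
     (\<forall>h\<in>carrier H. \<forall>k\<in>carrier H. \<forall>x\<in>carrier N. act x (h \<otimes>\<^bsub>H\<^esub> k) = act (act x h) k)"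

definition left_transitive :: "('g,'a) monoid_scheme \<Rightarrow> ('n,'b) monoid_scheme \<Rightarrow> ('g \<Rightarrow> 'n \<Rightarrow> 'n) \<Rightarrow> bool" where
  "left_transitive G N act \<longleftrightarrow> (\<forall>x\<in>carrier N. \<forall>y\<in>carrier N. \<exists>g\<in>carrier G. act g x = y)"

definition right_transitive :: "('h,'a) monoid_scheme \<Rightarrow> ('n,'b) monoid_scheme \<Rightarrow> ('n \<Rightarrow> 'h \<Rightarrow> 'n) \<Rightarrow> bool" where
  "right_transitive H N act \<longleftrightarrow> (\<forall>x\<in>carrier N. \<forall>y\<in>carrier N. \<exists>h\<in>carrier H. act x h = y)"

definition left_skew_bracoid :: "('g,'a) monoid_scheme \<Rightarrow> ('n,'b) monoid_scheme \<Rightarrow> ('g \<Rightarrow> 'n \<Rightarrow> 'n) \<Rightarrow> bool" where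
  "left_skew_bracoid G N act \<longleftrightarrow> group G \<and> group N \<and> left_action G N act \<and> left_transitive G N act \<and>
     (\<forall>g\<in>carrier G. \<forall>\<mu>\<in>carrier N. \<forall>\<eta>\<in>carrier N.
        act g (\<mu> \<otimes>\<^bsub>N\<^esub> \<eta>) = act g \<mu> \<otimes>\<^bsub>N\<^esub> inv\<^bsub>N\<^esub> (act g \<one>\<^bsub>N\<^esub>) \<otimes>\<^bsub>N\<^esub> act g \<eta>)"

definition right_skew_bracoid :: "('h,'a) monoid_scheme \<Rightarrow> ('n,'b) monoid_scheme \<Rightarrow> ('n \<Rightarrow> 'h \<Rightarrow> 'n) \<Rightarrow> bool" where
  "right_skew_bracoid H N act \<longleftrightarrow> group H \<and> group N \<and> right_action H N act \<and> right_transitive H N act \<and>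
     (\<forall>h\<in>carrier H. \<forall>\<eta>\<in>carrier N. \<forall>\<mu>\<in>carrier N.
        act (\<eta> \<otimes>\<^bsub>N\<^esub> \<mu>) h = act \<eta> h \<otimes>\<^bsub>N\<^esub> inv\<^bsub>N\<^esub> (act \<one>\<^bsub>N\<^esub> h) \<otimes>\<^bsub>N\<^esub> act \<mu> h)"

definition two_sided_skew_bracoid ::
  "('g,'a) monoid_scheme \<Rightarrow> ('g \<Rightarrow> 'n \<Rightarrow> 'n) \<Rightarrow> ('h,'c) monoid_scheme \<Rightarrow> ('n \<Rightarrow> 'h \<Rightarrow> 'n)
    \<Rightarrow> ('n,'b) monoid_scheme \<Rightarrow> bool" where
  "two_sided_skew_bracoid G lact H ract N \<longleftrightarrow>
     left_skew_bracoid G N lact \<and> right_skew_bracoid H N ract \<and>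
     (\<forall>g\<in>carrier G. \<forall>h\<in>carrier H. \<forall>\<eta>\<in>carrier N. lact g (ract \<eta> h) = ract (lact g \<eta>) h)"

definition two_sided_bracoid ::
  "('g,'a) monoid_scheme \<Rightarrow> ('g \<Rightarrow> 'n \<Rightarrow> 'n) \<Rightarrow> ('h,'c) monoid_scheme \<Rightarrow> ('n \<Rightarrow> 'h \<Rightarrow> 'n)
    \<Rightarrow> ('n,'b) monoid_scheme \<Rightarrow> bool" where
  "two_sided_bracoid G lact H ract N \<longleftrightarrow> two_sided_skew_bracoid G lact H ract N \<and> comm_group N"

definition bgamma :: "('n,'b) monoid_scheme \<Rightarrow> ('g \<Rightarrow> 'n \<Rightarrow> 'n) \<Rightarrow> 'g \<Rightarrow> 'n \<Rightarrow> 'n" where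
  "bgamma N lact g \<eta> = inv\<^bsub>N\<^esub> (lact g \<one>\<^bsub>N\<^esub>) \<otimes>\<^bsub>N\<^esub> lact g \<eta>"

definition balpha :: "('n,'b) monoid_scheme \<Rightarrow> ('g \<Rightarrow> 'n \<Rightarrow> 'n) \<Rightarrow> 'g \<Rightarrow> 'n \<Rightarrow> 'n" where
  "balpha N lact g \<eta> = inv\<^bsub>N\<^esub> (lact g \<one>\<^bsub>N\<^esub>) \<otimes>\<^bsub>N\<^esub> lact g \<eta> \<otimes>\<^bsub>N\<^esub> inv\<^bsub>N\<^esub> \<eta>"

definition bdelta :: "('n,'b) monoid_scheme \<Rightarrow> ('n \<Rightarrow> 'h \<Rightarrow> 'n) \<Rightarrow> 'h \<Rightarrow> 'n \<Rightarrow> 'n" where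
  "bdelta N ract h \<eta> = ract \<eta> h \<otimes>\<^bsub>N\<^esub> inv\<^bsub>N\<^esub> (ract \<one>\<^bsub>N\<^esub> h)"

definition bbeta :: "('n,'b) monoid_scheme \<Rightarrow> ('n \<Rightarrow> 'h \<Rightarrow> 'n) \<Rightarrow> 'h \<Rightarrow> 'n \<Rightarrow> 'n" where
  "bbeta N ract h \<eta> = inv\<^bsub>N\<^esub> \<eta> \<otimes>\<^bsub>N\<^esub> ract \<eta> h \<otimes>\<^bsub>N\<^esub> inv\<^bsub>N\<^esub> (ract \<one>\<^bsub>N\<^esub> h)"

end

theory Submission
  imports Defs
begin

text \<open>For fixed \<open>g\<close> the map \<open>g \<odot> -\<close> satisfies \<open>L(\<mu>\<eta>) = L(\<mu>) L(e)\<^sup>-\<^sup>1 L(\<eta>)\<close>, so it is an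
  endomorphism of \<open>N\<close> followed by the translation by \<open>L(e)\<close>: this makes \<open>\<gamma>(g)\<close>, and likewise
  \<open>\<delta>(h)\<close>, an endomorphism. When \<open>N\<close> is abelian, \<open>\<alpha>(g) = \<gamma>(g) - 1\<close> and \<open>\<beta>(h) = \<delta>(h) - 1\<close> in
  additive notation, hence endomorphisms as well. Both \<open>\<delta>(h)(\<gamma>(g) \<eta>)\<close> and \<open>\<gamma>(g)(\<delta>(h) \<eta>)\<close>
  reduce to \<open>(g \<odot> (\<eta> \<boxdot> h)) - (g \<odot> (e \<boxdot> h))\<close> because the two actions commute, which gives (3);
  (4) follows because \<open>\<gamma>(g) - 1\<close> and \<open>\<delta>(h) - 1\<close> commute once \<open>\<gamma>(g)\<close> and \<open>\<delta>(h)\<close> do.\<close>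

definition affine_map :: "('n,'b) monoid_scheme \<Rightarrow> ('n \<Rightarrow> 'n) \<Rightarrow> bool" where
  "affine_map N L \<longleftrightarrow> L \<in> carrier N \<rightarrow> carrier N \<and>
     (\<forall>x\<in>carrier N. \<forall>y\<in>carrier N. L (x \<otimes>\<^bsub>N\<^esub> y) = L x \<otimes>\<^bsub>N\<^esub> inv\<^bsub>N\<^esub> (L \<one>\<^bsub>N\<^esub>) \<otimes>\<^bsub>N\<^esub> L y)"

lemma affine_map_closed: "affine_map N L \<Longrightarrow> x \<in> carrier N \<Longrightarrow> L x \<in> carrier N"
  by (auto simp: affine_map_def)

lemma affine_map_mult:
  "affine_map N L \<Longrightarrow> x \<in> carrier N \<Longrightarrow> y \<in> carrier N \<Longrightarrow>
    L (x \<otimes>\<^bsub>N\<^esub> y) = L x \<otimes>\<^bsub>N\<^esub> inv\<^bsub>N\<^esub> (L \<one>\<^bsub>N\<^esub>) \<otimes>\<^bsub>N\<^esub> L y"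
  by (simp add: affine_map_def)

context group
begin

lemma affine_map_left_normalized_hom:
  assumes "affine_map G L"
  shows "(\<lambda>x. inv (L \<one>) \<otimes> L x) \<in> hom G G"
proof (rule homI)
  fix x y assume "x \<in> carrier G" "y \<in> carrier G"
  then show "inv (L \<one>) \<otimes> L (x \<otimes> y) = inv (L \<one>) \<otimes> L x \<otimes> (inv (L \<one>) \<otimes> L y)"
    using assms by (simp add: affine_map_mult affine_map_closed m_assoc)
qed (use assms in \<open>simp add: affine_map_closed\<close>)

lemma affine_map_right_normalized_hom:
  assumes "affine_map G L"
  shows "(\<lambda>x. L x \<otimes> inv (L \<one>)) \<in> hom G G"
proof (rule homI)
  fix x y assume "x \<in> carrier G" "y \<in> carrier G"
  then show "L (x \<otimes> y) \<otimes> inv (L \<one>) = L x \<otimes> inv (L \<one>) \<otimes> (L y \<otimes> inv (L \<one>))"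
    using assms by (simp add: affine_map_mult affine_map_closed m_assoc)
qed (use assms in \<open>simp add: affine_map_closed\<close>)

lemma affine_map_mult_inv:
  assumes L: "affine_map G L" and x: "x \<in> carrier G" and y: "y \<in> carrier G"
  shows "L (x \<otimes> inv y) \<otimes> inv (L \<one>) = L x \<otimes> inv (L y)"
proof -
  interpret \<delta>: group_hom G G "\<lambda>x. L x \<otimes> inv (L \<one>)"
    using affine_map_right_normalized_hom[OF L] by unfold_locales
  have closed: "L x \<in> carrier G" "L y \<in> carrier G" "L \<one> \<in> carrier G"
    using L x y by (auto simp: affine_map_closed)
  have "L (x \<otimes> inv y) \<otimes> inv (L \<one>) = L x \<otimes> inv (L \<one>) \<otimes> inv (L y \<otimes> inv (L \<one>))"
    using \<delta>.hom_mult[of x "inv y"] \<delta>.hom_inv[of y] x y by simp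
  also have "\<dots> = L x \<otimes> inv (L y)"
    using closed by (simp add: inv_mult_group m_assoc) (simp flip: m_assoc)
  finally show ?thesis .
qed

end

context comm_group
begin

lemma hom_mult_inv_hom:
  assumes "f \<in> hom G G"
  shows "(\<lambda>x. f x \<otimes> inv x) \<in> hom G G"
proof -
  interpret f: group_hom G G f using assms by unfold_locales
  show ?thesis
    by (rule homI) (simp_all add: f.hom_mult inv_mult m_ac)
qed

lemma commuting_homs_mult_inv_commute:
  assumes f: "f \<in> hom G G" and g: "g \<in> hom G G"
    and commute: "f (g x) = g (f x)" and x: "x \<in> carrier G"
  shows "f (g x \<otimes> inv x) \<otimes> inv (g x \<otimes> inv x) = g (f x \<otimes> inv x) \<otimes> inv (f x \<otimes> inv x)"
proof -
  interpret f: group_hom G G f using f by unfold_locales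
  interpret g: group_hom G G g using g by unfold_locales
  have "f (g x \<otimes> inv x) \<otimes> inv (g x \<otimes> inv x) = f (g x) \<otimes> inv (f x) \<otimes> inv (g x) \<otimes> x"
    using x by (simp add: f.hom_mult f.hom_inv inv_mult m_ac)
  also have "\<dots> = g (f x) \<otimes> inv (g x) \<otimes> inv (f x) \<otimes> x"
    using x by (simp add: commute m_ac)
  also have "\<dots> = g (f x \<otimes> inv x) \<otimes> inv (f x \<otimes> inv x)"
    using x by (simp add: g.hom_mult g.hom_inv inv_mult m_ac)
  finally show ?thesis .
qed

lemma commuting_affine_maps_normalized_commute:
  assumes L: "affine_map G L" and R: "affine_map G R"
    and commute: "\<And>x. x \<in> carrier G \<Longrightarrow> L (R x) = R (L x)" and x: "x \<in> carrier G"
  shows "R (inv (L \<one>) \<otimes> L x) \<otimes> inv (R \<one>) = inv (L \<one>) \<otimes> L (R x \<otimes> inv (R \<one>))"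
proof -
  have closed: "L x \<in> carrier G" "L \<one> \<in> carrier G" "R x \<in> carrier G" "R \<one> \<in> carrier G"
    using L R x by (auto simp: affine_map_closed)
  have "R (inv (L \<one>) \<otimes> L x) \<otimes> inv (R \<one>) = R (L x \<otimes> inv (L \<one>)) \<otimes> inv (R \<one>)"
    using closed by (simp add: m_comm)
  also have "\<dots> = R (L x) \<otimes> inv (R (L \<one>))"
    using affine_map_mult_inv[OF R] closed by simp
  also have "\<dots> = L (R x) \<otimes> inv (L (R \<one>))"
    using commute x by simp
  also have "\<dots> = L (R x \<otimes> inv (R \<one>)) \<otimes> inv (L \<one>)"
    using affine_map_mult_inv[OF L] closed by simp
  also have "\<dots> = inv (L \<one>) \<otimes> L (R x \<otimes> inv (R \<one>))"
    using L closed by (simp add: m_comm affine_map_closed)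
  finally show ?thesis .
qed

end

lemma left_skew_bracoid_affine_map:
  "left_skew_bracoid G N lact \<Longrightarrow> g \<in> carrier G \<Longrightarrow> affine_map N (lact g)"
  by (auto simp: left_skew_bracoid_def left_action_def affine_map_def)

lemma right_skew_bracoid_affine_map:
  "right_skew_bracoid H N ract \<Longrightarrow> h \<in> carrier H \<Longrightarrow> affine_map N (\<lambda>x. ract x h)"
  by (auto simp: right_skew_bracoid_def right_action_def affine_map_def)

lemma bgamma_hom:
  assumes "left_skew_bracoid G N lact" and "g \<in> carrier G"
  shows "bgamma N lact g \<in> hom N N"
proof -
  interpret N: group N using assms(1) by (simp add: left_skew_bracoid_def)
  show ?thesis
    using N.affine_map_left_normalized_hom[OF left_skew_bracoid_affine_map[OF assms]]
    by (simp add: bgamma_def[abs_def])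
qed

lemma bdelta_hom:
  assumes "right_skew_bracoid H N ract" and "h \<in> carrier H"
  shows "bdelta N ract h \<in> hom N N"
proof -
  interpret N: group N using assms(1) by (simp add: right_skew_bracoid_def)
  show ?thesis
    using N.affine_map_right_normalized_hom[OF right_skew_bracoid_affine_map[OF assms]]
    by (simp add: bdelta_def[abs_def])
qed

lemma balpha_eq_bgamma_mult_inv: "balpha N lact g x = bgamma N lact g x \<otimes>\<^bsub>N\<^esub> inv\<^bsub>N\<^esub> x"
  by (simp add: balpha_def bgamma_def)

lemma bbeta_eq_bdelta_mult_inv:
  assumes "right_skew_bracoid H N ract" and "comm_group N"
    and "h \<in> carrier H" and "x \<in> carrier N"
  shows "bbeta N ract h x = bdelta N ract h x \<otimes>\<^bsub>N\<^esub> inv\<^bsub>N\<^esub> x"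
proof -
  interpret N: comm_group N by fact
  have R: "affine_map N (\<lambda>x. ract x h)"
    using assms(1,3) by (rule right_skew_bracoid_affine_map)
  show ?thesis
    using affine_map_closed[OF R] assms(4) by (simp add: bbeta_def bdelta_def N.m_ac)
qed

lemma balpha_hom:
  assumes "left_skew_bracoid G N lact" and "comm_group N" and "g \<in> carrier G"
  shows "balpha N lact g \<in> hom N N"
proof -
  interpret N: comm_group N by fact
  show ?thesis
    using N.hom_mult_inv_hom[OF bgamma_hom[OF assms(1,3)]]
    by (simp add: balpha_eq_bgamma_mult_inv[abs_def])
qed

lemma bbeta_hom:
  assumes "right_skew_bracoid H N ract" and "comm_group N" and "h \<in> carrier H"
  shows "bbeta N ract h \<in> hom N N"
proof -
  interpret N: comm_group N by fact
  show ?thesis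
    using N.hom_mult_inv_hom[OF bdelta_hom[OF assms(1,3)]]
    by (rule N.hom_restrict) (simp add: bbeta_eq_bdelta_mult_inv[OF assms])
qed

lemma two_sided_bracoid_bdelta_bgamma_commute:
  assumes "two_sided_bracoid G lact H ract N"
    and "g \<in> carrier G" and "h \<in> carrier H" and "\<eta> \<in> carrier N"
  shows "bdelta N ract h (bgamma N lact g \<eta>) = bgamma N lact g (bdelta N ract h \<eta>)"
proof -
  have lact: "left_skew_bracoid G N lact" and ract: "right_skew_bracoid H N ract"
    and commute: "\<And>x. x \<in> carrier N \<Longrightarrow> lact g (ract x h) = ract (lact g x) h"
    using assms(1-3) by (auto simp: two_sided_bracoid_def two_sided_skew_bracoid_def)
  interpret N: comm_group N using assms(1) by (simp add: two_sided_bracoid_def)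
  show ?thesis
    using N.commuting_affine_maps_normalized_commute[OF left_skew_bracoid_affine_map[OF lact assms(2)]
        right_skew_bracoid_affine_map[OF ract assms(3)] commute assms(4)]
    by (simp add: bgamma_def bdelta_def)
qed

lemma two_sided_bracoid_bbeta_balpha_commute:
  assumes "two_sided_bracoid G lact H ract N"
    and "g \<in> carrier G" and "h \<in> carrier H" and "\<eta> \<in> carrier N"
  shows "bbeta N ract h (balpha N lact g \<eta>) = balpha N lact g (bbeta N ract h \<eta>)"
proof -
  have lact: "left_skew_bracoid G N lact" and ract: "right_skew_bracoid H N ract"
    and comm: "comm_group N"
    using assms(1) by (auto simp: two_sided_bracoid_def two_sided_skew_bracoid_def)
  interpret N: comm_group N by (fact comm)
  have "balpha N lact g \<eta> \<in> carrier N"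
    using balpha_hom[OF lact comm assms(2)] assms(4) by (rule hom_in_carrier)
  moreover have "bbeta N ract h \<eta> \<in> carrier N"
    using bbeta_hom[OF ract comm assms(3)] assms(4) by (rule hom_in_carrier)
  ultimately show ?thesis
    using N.commuting_homs_mult_inv_commute[OF bgamma_hom[OF lact assms(2)] bdelta_hom[OF ract assms(3)]
        two_sided_bracoid_bdelta_bgamma_commute[OF assms, symmetric] assms(4)]
    by (simp add: balpha_eq_bgamma_mult_inv bbeta_eq_bdelta_mult_inv[OF ract comm assms(3)] assms(4))
qed

theorem theorem3p3:
  fixes G :: "('g,'a) monoid_scheme" and H :: "('h,'c) monoid_scheme" and N :: "('n,'b) monoid_scheme"
    and lact :: "'g \<Rightarrow> 'n \<Rightarrow> 'n" and ract :: "'n \<Rightarrow> 'h \<Rightarrow> 'n"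
  assumes "two_sided_bracoid G lact H ract N"
    and "g \<in> carrier G" and "h \<in> carrier H" and "\<eta> \<in> carrier N"
  shows "balpha N lact g \<in> hom N N
    \<and> bbeta N ract h \<in> hom N N
    \<and> bdelta N ract h (bgamma N lact g \<eta>) = bgamma N lact g (bdelta N ract h \<eta>)
    \<and> bbeta N ract h (balpha N lact g \<eta>) = balpha N lact g (bbeta N ract h \<eta>)"
proof -
  have lact: "left_skew_bracoid G N lact" and ract: "right_skew_bracoid H N ract"
    and comm: "comm_group N"
    using assms(1) by (auto simp: two_sided_bracoid_def two_sided_skew_bracoid_def)
  show ?thesis
    using balpha_hom[OF lact comm assms(2)] bbeta_hom[OF ract comm assms(3)]
      two_sided_bracoid_bdelta_bgamma_commute[OF assms]
      two_sided_bracoid_bbeta_balpha_commute[OF assms]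
    by blast
qed

end
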